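(* Let $f\in\mathcal F^{\,r}_{op}$ and let $k$ satisfy $1\le k<\frac{1}{2f(0)}$. Then the inequality $I^{SLD}_\rho(A)\le k\,I^f_\rho(A)$ does not hold for all $n$, all faithful $\rho\in\mathcal D^1_n$ and all self-adjoint $A\in M_n(\mathbb C)$; i.e. there exist $n$, a faithful $\rho\in\mathcal D^1_n$ and a self-adjoint $A$ with $I^{SLD}_\rho(A)>k\,I^f_\rho(A)$. Thus the constant $\frac{1}{2f(0)}$ in $I^{SLD}_\rho(A)\le\frac{1}{2f(0)}I^f_\rho(A)$ is optimal.
   Context: $\mathcal F_{op}$ is the class of functions $f:(0,\infty)\to(0,\infty)$ that are operator monotone, satisfy $f(1)=1$ and $tf(t^{-1})=f(t)$ for all $t>0$. $f(0):=\lim_{x\to0^+}f(x)$, and $\mathcal F^{\,r}_{op}=\{f\in\mathcal F_{op}: f(0)\neq0\}$. $\mathcal D_n^1$ is the set of strictly positive $n\times n$ density matrices. For $x,y>0$, $m_f(x,y)=xf(y/x)$; $L_\rho(X)=\rho X$, $R_\rho(X)=X\rho$, and $m_f(L_\rho,R_\rho)$ multiplies the entry $X_{ij}$ of $X$ (in an orthonormal eigenbasis of $\rho$ with eigenvalues $\lambda_i$) by $m_f(\lambda_i,\lambda_j)$. $\|X\|^2_{\rho,f}=\mathrm{Tr}\big(X^* m_f(L_\rho,R_\rho)^{-1}(X)\big)$. The $f$-information is $I^f_\rho(A)=\frac{f(0)}{2}\|i[\rho,A]\|^2_{\rho,f}$, and $I^{SLD}_\rho:=I^{f_{SLD}}_\rho$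 with $f_{SLD}(x)=\frac{1+x}{2}$. *)

theory Defs
  imports "Jordan_Normal_Form.Schur_Decomposition" Complex_Main
begin

definition mtrace :: "complex mat \<Rightarrow> complex" where
  "mtrace A = (\<Sum>i<dim_row A. A $$ (i,i))"

definition hermitian_n :: "nat \<Rightarrow> complex mat \<Rightarrow> bool" where
  "hermitian_n n A \<longleftrightarrow> A \<in> carrier_mat n n \<and> mat_adjoint A = A"

definition unitary_n :: "nat \<Rightarrow> complex mat \<Rightarrow> bool" where
  "unitary_n n U \<longleftrightarrow> U \<in> carrier_mat n n \<and> mat_adjoint U * U = 1\<^sub>m n \<and> U * mat_adjoint U = 1\<^sub>m n"

definition loewner_le :: "nat \<Rightarrow> complex mat \<Rightarrow> complex mat \<Rightarrow> bool" where
  "loewner_le n A B \<longleftrightarrow> hermitian_n n A \<and> hermitian_n n B \<and>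
     (\<forall>v \<in> carrier_vec n. 0 \<le> Re (((B - A) *\<^sub>v v) \<bullet>c v))"

(* the matrix U diag(g(l_0),...,g(l_{n-1})) U^H  (functional calculus when l are the eigenvalues) *)
definition spec_mat :: "nat \<Rightarrow> complex mat \<Rightarrow> (nat \<Rightarrow> real) \<Rightarrow> complex mat" where
  "spec_mat n U l = U * mat_diag n (\<lambda>i. complex_of_real (l i)) * mat_adjoint U"

(* operator monotone on (0,\<infinity>): for all n and all positive definite A \<le> B
   (given through spectral decompositions A = U diag(l) U^H, B = V diag(m) V^H),
   f(A) \<le> f(B) *)
definition operator_monotone :: "(real \<Rightarrow> real) \<Rightarrow> bool" where
  "operator_monotone f \<longleftrightarrow>
     (\<forall>n U l V m. unitary_n n U \<and> unitary_n n V \<and> (\<forall>i<n. 0 < l i \<and> 0 < m i) \<and>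
        loewner_le n (spec_mat n U l) (spec_mat n V m) \<longrightarrow>
        loewner_le n (spec_mat n U (f \<circ> l)) (spec_mat n V (f \<circ> m)))"

(* the class F_op (f only matters on (0,\<infinity>)) *)
definition F_op :: "(real \<Rightarrow> real) set" where
  "F_op = {f. (\<forall>t>0. 0 < f t) \<and> operator_monotone f \<and> f 1 = 1 \<and>
              (\<forall>t>0. t * f (inverse t) = f t)}"

definition f_zero :: "(real \<Rightarrow> real) \<Rightarrow> real" where
  "f_zero f = Lim (at_right 0) f"

definition F_op_r :: "(real \<Rightarrow> real) set" where
  "F_op_r = {f \<in> F_op. f_zero f \<noteq> 0}"

definition m_f :: "(real \<Rightarrow> real) \<Rightarrow> real \<Rightarrow> real \<Rightarrow> real" where
  "m_f f x y = x * f (y / x)"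

definition faithful_density :: "nat \<Rightarrow> complex mat \<Rightarrow> bool" where
  "faithful_density n \<rho> \<longleftrightarrow> hermitian_n n \<rho> \<and>
     (\<forall>v \<in> carrier_vec n. v \<noteq> 0\<^sub>v n \<longrightarrow> 0 < Re ((\<rho> *\<^sub>v v) \<bullet>c v)) \<and> mtrace \<rho> = 1"

definition eig_decomp :: "complex mat \<Rightarrow> complex mat \<times> (nat \<Rightarrow> real)" where
  "eig_decomp \<rho> = (SOME (U, l). unitary_n (dim_row \<rho>) U \<and> \<rho> = spec_mat (dim_row \<rho>) U l)"

(* m_f(L_\<rho>,R_\<rho>)^{-1}(X): in the eigenbasis of \<rho>, divide X_ij by m_f(\<lambda>_i,\<lambda>_j) *)
definition mf_LR_inv :: "(real \<Rightarrow> real) \<Rightarrow> complex mat \<Rightarrow> complex mat \<Rightarrow> complex mat" where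
  "mf_LR_inv f \<rho> X = (case eig_decomp \<rho> of (U, l) \<Rightarrow>
     let n = dim_row \<rho>; Y = mat_adjoint U * X * U in
     U * mat n n (\<lambda>(i,j). Y $$ (i,j) / complex_of_real (m_f f (l i) (l j))) * mat_adjoint U)"

definition norm_sq_f :: "(real \<Rightarrow> real) \<Rightarrow> complex mat \<Rightarrow> complex mat \<Rightarrow> real" where
  "norm_sq_f f \<rho> X = Re (mtrace (mat_adjoint X * mf_LR_inv f \<rho> X))"

definition commutator :: "complex mat \<Rightarrow> complex mat \<Rightarrow> complex mat" where
  "commutator A B = A * B - B * A"

definition f_information :: "(real \<Rightarrow> real) \<Rightarrow> complex mat \<Rightarrow> complex mat \<Rightarrow> real" where
  "f_information f \<rho> A = f_zero f / 2 * norm_sq_f f \<rho> (\<i> \<cdot>\<^sub>m commutator \<rho> A)"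

definition f_SLD :: "real \<Rightarrow> real" where
  "f_SLD x = (1 + x) / 2"

definition I_SLD :: "complex mat \<Rightarrow> complex mat \<Rightarrow> real" where
  "I_SLD \<rho> A = f_information f_SLD \<rho> A"

end

theory Submission
  imports Defs
begin

(* Take \<rho> = diag(1 - b, b) with k f(0) < b < 1/2 and A = \<sigma>_x. In every eigenbasis of \<rho>,
   i[\<rho>, A] only couples the two distinct eigenvalues 1 - b and b. For such a pair
   m_SLD = (1 - b + b)/2 = 1/2, whereas m_f \<ge> min(1 - b, b) = b > k f(0), since f \<ge> 1 on [1, \<infinity>)
   by operator monotonicity and m_f is symmetric by t f(1/t) = f(t). Comparing the two norms entry
   by entry gives I^SLD > k I^f. *)

lemma mat_adjoint_dim [simp]:
  "dim_row (mat_adjoint A) = dim_col A" "dim_col (mat_adjoint A) = dim_row A"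
  unfolding mat_adjoint_def by auto

lemma mat_adjoint_index [simp]:
  "i < dim_col A \<Longrightarrow> j < dim_row A \<Longrightarrow> mat_adjoint A $$ (i, j) = cnj (A $$ (j, i))"
  unfolding mat_adjoint_def by (simp add: mat_of_rows_index)

lemma mat_adjoint_mult:
  "A \<in> carrier_mat n m \<Longrightarrow> B \<in> carrier_mat m p \<Longrightarrow>
   mat_adjoint (A * B :: complex mat) = mat_adjoint B * mat_adjoint A"
  by (rule eq_matI) (auto simp: scalar_prod_def mult.commute)

lemma mat_adjoint_adjoint [simp]: "mat_adjoint (mat_adjoint (A :: complex mat)) = A"
  by (rule eq_matI) auto

lemma mat_adjoint_diag_real:
  "mat_adjoint (mat_diag n (\<lambda>i. complex_of_real (l i))) = mat_diag n (\<lambda>i. complex_of_real (l i))"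
  by (rule eq_matI) (auto simp: mat_diag_def)

lemma mtrace_mult_commute:
  "A \<in> carrier_mat n m \<Longrightarrow> B \<in> carrier_mat m n \<Longrightarrow> mtrace (A * B :: complex mat) = mtrace (B * A)"
  unfolding mtrace_def by (simp add: scalar_prod_def atLeast0LessThan sum.swap[of _ "{..<m}"] mult.commute)

lemma unitary_nD:
  assumes "unitary_n n U"
  shows "U \<in> carrier_mat n n" "mat_adjoint U \<in> carrier_mat n n"
    "mat_adjoint U * U = 1\<^sub>m n" "U * mat_adjoint U = 1\<^sub>m n"
  using assms unfolding unitary_n_def by auto

lemma mat_adjoint_one [simp]: "mat_adjoint (1\<^sub>m n :: complex mat) = 1\<^sub>m n"
  by (rule eq_matI) auto

lemma unitary_n_one: "unitary_n n (1\<^sub>m n)"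
  unfolding unitary_n_def by simp

lemma spec_mat_carrier: "unitary_n n U \<Longrightarrow> spec_mat n U l \<in> carrier_mat n n"
  unfolding spec_mat_def using unitary_nD(1,2) by (intro mult_carrier_mat) auto

lemma spec_mat_one: "spec_mat n (1\<^sub>m n) l = mat_diag n (\<lambda>i. complex_of_real (l i))"
  unfolding spec_mat_def by (simp add: mat_diag_def)

lemma unitary_conj_inverse:
  assumes "unitary_n n U" and "X \<in> carrier_mat n n"
  shows "U * (mat_adjoint U * X * U) * mat_adjoint U = X"
proof -
  note U = unitary_nD[OF assms(1)]
  have "U * (mat_adjoint U * X * U) * mat_adjoint U = (U * mat_adjoint U) * X * (U * mat_adjoint U)"
    using U(1,2) assms(2) by (simp add: assoc_mult_mat[of _ n n _ n _ n])
  then show ?thesis using U(4) assms(2) by simp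
qed

lemma spec_mat_mult_unitary:
  assumes "unitary_n n U"
  shows "spec_mat n U l * U = U * mat_diag n (\<lambda>i. complex_of_real (l i))"
    and "mat_adjoint U * spec_mat n U l = mat_diag n (\<lambda>i. complex_of_real (l i)) * mat_adjoint U"
proof -
  note U = unitary_nD[OF assms]
  define D where "D = mat_diag n (\<lambda>i. complex_of_real (l i))"
  have D: "D \<in> carrier_mat n n" unfolding D_def by simp
  have "spec_mat n U l * U = U * D * (mat_adjoint U * U)"
    unfolding spec_mat_def D_def[symmetric] using U(1,2) D by (simp add: assoc_mult_mat[of _ n n _ n _ n])
  then show "spec_mat n U l * U = U * mat_diag n (\<lambda>i. complex_of_real (l i))"
    using U(1,3) D unfolding D_def[symmetric] by simp
  have "mat_adjoint U * spec_mat n U l = (mat_adjoint U * U) * D * mat_adjoint U"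
    unfolding spec_mat_def D_def[symmetric] using U(1,2) D by (simp add: assoc_mult_mat[of _ n n _ n _ n])
  then show "mat_adjoint U * spec_mat n U l = mat_diag n (\<lambda>i. complex_of_real (l i)) * mat_adjoint U"
    using U(2,3) D unfolding D_def[symmetric] by simp
qed

lemma eig_decomp_spectral:
  assumes "\<rho> \<in> carrier_mat n n" and "unitary_n n V" and "\<rho> = spec_mat n V h"
    and "eig_decomp \<rho> = (U, l)"
  shows "unitary_n n U" and "\<rho> = spec_mat n U l"
proof -
  have "\<exists>p. case p of (U, l) \<Rightarrow> unitary_n (dim_row \<rho>) U \<and> \<rho> = spec_mat (dim_row \<rho>) U l"
    using assms(1-3) by auto
  from someI_ex[OF this] show "unitary_n n U" "\<rho> = spec_mat n U l"
    using assms(1,4) unfolding eig_decomp_def by auto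
qed

lemma spec_mat_diag_eigenvalue:
  assumes U: "unitary_n n U"
    and diag: "mat_diag n (\<lambda>k. complex_of_real (h k)) = spec_mat n U l" and i: "i < n"
  shows "\<exists>k<n. l i = h k"
proof (rule ccontr)
  assume new: "\<not> (\<exists>k<n. l i = h k)"
  note Uc = unitary_nD(1)[OF U]
  have col_zero: "U $$ (k, i) = 0" if k: "k < n" for k
  proof -
    have "(mat_diag n (\<lambda>k. complex_of_real (h k)) * U) $$ (k, i)
        = (U * mat_diag n (\<lambda>i. complex_of_real (l i))) $$ (k, i)"
      using spec_mat_mult_unitary(1)[OF U] diag by simp
    then have "complex_of_real (h k - l i) * U $$ (k, i) = 0"
      using k i Uc by (simp add: mat_diag_mult_left[OF Uc] mat_diag_mult_right[OF Uc] algebra_simps)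
    moreover have "h k \<noteq> l i" using new k by auto
    ultimately show ?thesis by simp
  qed
  have "(mat_adjoint U * U) $$ (i, i) = 0"
    using i Uc col_zero by (simp add: scalar_prod_def)
  moreover have "(mat_adjoint U * U) $$ (i, i) = 1"
    using unitary_nD(3)[OF U] i by simp
  ultimately show False by simp
qed

(* eig_decomp may pick any eigenbasis (eigenvalues of \<rho> can be repeated), so only the
   eigenvalues it returns can be pinned down. *)
lemma eig_decomp_diag:
  assumes "eig_decomp (mat_diag n (\<lambda>i. complex_of_real (h i))) = (U, l)"
  shows "unitary_n n U" and "mat_diag n (\<lambda>i. complex_of_real (h i)) = spec_mat n U l"
    and "\<And>i. i < n \<Longrightarrow> \<exists>k<n. l i = h k"
proof -
  have "mat_diag n (\<lambda>i. complex_of_real (h i)) = spec_mat n (1\<^sub>m n) h"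
    unfolding spec_mat_one ..
  from eig_decomp_spectral[OF mat_diag_dim unitary_n_one this assms]
  show U: "unitary_n n U" and diag: "mat_diag n (\<lambda>i. complex_of_real (h i)) = spec_mat n U l"
    by auto
  show "\<exists>k<n. l i = h k" if "i < n" for i
    using spec_mat_diag_eigenvalue[OF U diag that] .
qed

lemma commutator_unitary_conj_index:
  assumes U: "unitary_n n U" and A: "A \<in> carrier_mat n n" and i: "i < n" and j: "j < n"
  shows "(mat_adjoint U * (\<i> \<cdot>\<^sub>m commutator (spec_mat n U l) A) * U) $$ (i, j)
       = \<i> * complex_of_real (l i - l j) * (mat_adjoint U * A * U) $$ (i, j)"
proof -
  define \<rho> where "\<rho> = spec_mat n U l"
  define D where "D = mat_diag n (\<lambda>i. complex_of_real (l i))"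
  define B where "B = mat_adjoint U * A * U"
  note Uc = unitary_nD(1,2)[OF U]
  have Dc: "D \<in> carrier_mat n n" unfolding D_def by simp
  have Bc: "B \<in> carrier_mat n n" unfolding B_def using Uc A by simp
  have \<rho>c: "\<rho> \<in> carrier_mat n n" unfolding \<rho>_def using U by (rule spec_mat_carrier)
  have \<rho>A: "\<rho> * A \<in> carrier_mat n n" "A * \<rho> \<in> carrier_mat n n"
    and U\<rho>A: "mat_adjoint U * (\<rho> * A) \<in> carrier_mat n n" "mat_adjoint U * (A * \<rho>) \<in> carrier_mat n n"
    and UC: "mat_adjoint U * (\<rho> * A) - mat_adjoint U * (A * \<rho>) \<in> carrier_mat n n"
    using A \<rho>c Uc by (meson mult_carrier_mat minus_carrier_mat)+
  have "mat_adjoint U * (\<i> \<cdot>\<^sub>m commutator \<rho> A) * U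
      = \<i> \<cdot>\<^sub>m (mat_adjoint U * (\<rho> * A) * U - mat_adjoint U * (A * \<rho>) * U)"
    unfolding commutator_def
    by (simp only: mult_smult_distrib[OF Uc(2) minus_carrier_mat[OF \<rho>A(2)]]
        mult_smult_assoc_mat[OF UC Uc(1)] mult_minus_distrib_mat[OF Uc(2) \<rho>A]
        minus_mult_distrib_mat[OF U\<rho>A Uc(1)])
  also have "\<dots> = \<i> \<cdot>\<^sub>m ((mat_adjoint U * \<rho>) * A * U - mat_adjoint U * A * (\<rho> * U))"
    using Uc A \<rho>c by (simp add: assoc_mult_mat[of _ n n _ n _ n])
  also have "\<dots> = \<i> \<cdot>\<^sub>m (D * B - B * D)"
    unfolding \<rho>_def spec_mat_mult_unitary[OF U] D_def[symmetric] B_def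
    using Uc A Dc by (simp add: assoc_mult_mat[of _ n n _ n _ n])
  finally show ?thesis
    unfolding \<rho>_def[symmetric] B_def[symmetric] using i j Bc Dc
    by (simp add: D_def mat_diag_mult_left[OF Bc] mat_diag_mult_right[OF Bc] algebra_simps)
qed

lemma norm_sq_f_eigenbasis:
  assumes ed: "eig_decomp \<rho> = (U, l)" and U: "unitary_n n U"
    and \<rho>: "\<rho> \<in> carrier_mat n n" and X: "X \<in> carrier_mat n n"
  shows "norm_sq_f g \<rho> X
       = (\<Sum>i<n. \<Sum>j<n. (cmod ((mat_adjoint U * X * U) $$ (i, j)))\<^sup>2 / m_f g (l i) (l j))"
proof -
  define Y where "Y = mat_adjoint U * X * U"
  define Z where "Z = mat n n (\<lambda>(i, j). Y $$ (i, j) / complex_of_real (m_f g (l i) (l j)))"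
  note Uc = unitary_nD(1,2)[OF U]
  have XH: "mat_adjoint X \<in> carrier_mat n n" using X by auto
  have Yc: "Y \<in> carrier_mat n n" and Zc: "Z \<in> carrier_mat n n"
    unfolding Y_def Z_def using Uc X by auto
  have "mf_LR_inv g \<rho> X = U * Z * mat_adjoint U"
    unfolding mf_LR_inv_def ed Z_def Y_def using \<rho> by (simp add: Let_def)
  then have "mtrace (mat_adjoint X * mf_LR_inv g \<rho> X) = mtrace ((mat_adjoint X * U * Z) * mat_adjoint U)"
    using Uc XH Zc by (simp add: assoc_mult_mat[of _ n n _ n _ n])
  also have "\<dots> = mtrace (mat_adjoint U * (mat_adjoint X * U * Z))"
    using Uc XH Zc by (intro mtrace_mult_commute[of _ n n]) auto
  also have "\<dots> = mtrace (mat_adjoint Y * Z)"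
    unfolding Y_def using Uc X XH Zc
    by (simp add: mat_adjoint_mult[of _ n n _ n] assoc_mult_mat[of _ n n _ n _ n])
  also have "\<dots> = (\<Sum>j<n. \<Sum>i<n. cnj (Y $$ (i, j)) * (Y $$ (i, j) / complex_of_real (m_f g (l i) (l j))))"
    unfolding mtrace_def using Yc Zc unfolding Z_def
    by (auto simp: scalar_prod_def atLeast0LessThan intro!: sum.cong)
  also have "\<dots> = (\<Sum>i<n. \<Sum>j<n. complex_of_real ((cmod (Y $$ (i, j)))\<^sup>2 / m_f g (l i) (l j)))"
    using complex_norm_square[of "Y $$ _"]
    by (subst sum.swap) (simp add: mult.commute)
  finally show ?thesis
    unfolding norm_sq_f_def Y_def[symmetric] by (simp only: Re_sum Re_complex_of_real)
qed

lemma loewner_le_1_diag_iff: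
  "loewner_le 1 (mat_diag 1 (\<lambda>_. complex_of_real x)) (mat_diag 1 (\<lambda>_. complex_of_real y)) \<longleftrightarrow> x \<le> y"
proof -
  have quad: "Re (((mat_diag 1 (\<lambda>_. complex_of_real y) - mat_diag 1 (\<lambda>_. complex_of_real x)) *\<^sub>v v) \<bullet>c v)
      = (y - x) * (cmod (v $ 0))\<^sup>2" if "v \<in> carrier_vec 1" for v :: "complex vec"
    using that by (simp add: mat_diag_def scalar_prod_def mult_mat_vec_def row_def
        complex_mult_cnj cmod_power2 algebra_simps)
  have herm: "hermitian_n 1 (mat_diag 1 (\<lambda>_. complex_of_real z))" for z
    unfolding hermitian_n_def using mat_adjoint_diag_real[of 1 "\<lambda>_. z"] by simp
  have "(\<forall>v \<in> carrier_vec 1. 0 \<le> (y - x) * (cmod (v $ 0))\<^sup>2) \<longleftrightarrow> x \<le> y"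
  proof
    assume "\<forall>v \<in> carrier_vec 1. 0 \<le> (y - x) * (cmod (v $ 0))\<^sup>2"
    from this[rule_format, of "unit_vec 1 0"] show "x \<le> y" by simp
  qed simp
  then show ?thesis
    unfolding loewner_le_def using quad herm by simp
qed

lemma operator_monotone_mono:
  assumes "operator_monotone f" and "0 < s" and "s \<le> t"
  shows "f s \<le> f t"
proof -
  have "loewner_le 1 (spec_mat 1 (1\<^sub>m 1) (\<lambda>_. s)) (spec_mat 1 (1\<^sub>m 1) (\<lambda>_. t))"
    unfolding spec_mat_one loewner_le_1_diag_iff by (rule assms(3))
  then have "loewner_le 1 (spec_mat 1 (1\<^sub>m 1) (f \<circ> (\<lambda>_. s))) (spec_mat 1 (1\<^sub>m 1) (f \<circ> (\<lambda>_. t)))"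
    using assms unfolding operator_monotone_def by (simp add: unitary_n_one)
  then show ?thesis
    unfolding spec_mat_one o_def loewner_le_1_diag_iff .
qed

lemma F_op_ge_one: "f \<in> F_op \<Longrightarrow> 1 \<le> t \<Longrightarrow> 1 \<le> f t"
  using operator_monotone_mono[of f 1 t] unfolding F_op_def by simp

lemma m_f_ge_min:
  assumes f: "f \<in> F_op" and "0 < x" and "0 < y"
  shows "min x y \<le> m_f f x y"
proof (cases "x \<le> y")
  case True
  then show ?thesis
    using F_op_ge_one[OF f, of "y / x"] \<open>0 < x\<close> by (simp add: m_f_def)
next
  case False
  have "\<forall>t>0. t * f (inverse t) = f t" using f unfolding F_op_def by blast
  then have "y / x * f (x / y) = f (y / x)"
    using \<open>0 < x\<close> \<open>0 < y\<close> by (metis divide_pos_pos inverse_divide)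
  then have "m_f f x y = y * f (x / y)"
    unfolding m_f_def using \<open>0 < x\<close> by (auto simp: field_simps)
  then show ?thesis
    using F_op_ge_one[OF f, of "x / y"] False \<open>0 < y\<close> by simp
qed

lemma m_f_SLD: "x \<noteq> 0 \<Longrightarrow> m_f f_SLD x y = (x + y) / 2"
  unfolding m_f_def f_SLD_def by (simp add: divide_simps)

lemma f_zero_SLD: "f_zero f_SLD = 1 / 2"
proof -
  have "(f_SLD \<longlongrightarrow> (1 + 0) / 2) (at_right 0)"
    unfolding f_SLD_def by (intro tendsto_intros) auto
  then show ?thesis
    unfolding f_zero_def by (intro tendsto_Lim) auto
qed

lemma faithful_density_diag:
  assumes pos: "\<forall>i<n. 0 < h i" and trace: "(\<Sum>i<n. h i) = 1"
  shows "faithful_density n (mat_diag n (\<lambda>i. complex_of_real (h i)))"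
  unfolding faithful_density_def hermitian_n_def
proof (intro conjI ballI impI)
  fix v :: "complex vec"
  assume v: "v \<in> carrier_vec n" and "v \<noteq> 0\<^sub>v n"
  then obtain k where k: "k < n" "v $ k \<noteq> 0" by (metis eq_vecI index_zero_vec carrier_vecD)
  have "(mat_diag n (\<lambda>i. complex_of_real (h i)) *\<^sub>v v) $ i = complex_of_real (h i) * v $ i"
    if "i < n" for i
    using v that by (simp add: mult_mat_vec_def scalar_prod_def mat_diag_def row_def
        if_distrib[of "\<lambda>a. a * _"] cong: if_cong)
  then have "(mat_diag n (\<lambda>i. complex_of_real (h i)) *\<^sub>v v) \<bullet>c v
      = (\<Sum>i<n. complex_of_real (h i) * (v $ i * cnj (v $ i)))"
    using v by (simp add: scalar_prod_def atLeast0LessThan mult.assoc)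
  then have "Re ((mat_diag n (\<lambda>i. complex_of_real (h i)) *\<^sub>v v) \<bullet>c v) = (\<Sum>i<n. h i * (cmod (v $ i))\<^sup>2)"
    by (simp add: complex_mult_cnj cmod_power2)
  also have "\<dots> > 0"
    using pos k by (intro sum_pos2[of _ k]) auto
  finally show "0 < Re ((mat_diag n (\<lambda>i. complex_of_real (h i)) *\<^sub>v v) \<bullet>c v)" .
next
  show "mtrace (mat_diag n (\<lambda>i. complex_of_real (h i))) = 1"
    unfolding mtrace_def using trace by (simp add: mat_diag_def flip: of_real_sum)
qed (simp_all add: mat_adjoint_diag_real)

lemma commutator_diag_index:
  assumes "A \<in> carrier_mat n n" and "i < n" and "j < n"
  shows "commutator (mat_diag n d) A $$ (i, j) = (d i - d j) * A $$ (i, j)"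
  unfolding commutator_def using assms
  by (simp add: mat_diag_mult_left[OF assms(1)] mat_diag_mult_right[OF assms(1)] algebra_simps)

lemma commutator_diag_nonzero:
  assumes "A \<in> carrier_mat n n" and "i < n" and "j < n" and "d i \<noteq> d j" and "A $$ (i, j) \<noteq> 0"
  shows "commutator (mat_diag n d) A \<noteq> 0\<^sub>m n n"
proof
  assume "commutator (mat_diag n d) A = 0\<^sub>m n n"
  then have "(d i - d j) * A $$ (i, j) = 0"
    using commutator_diag_index[OF assms(1-3), of d] assms(2,3) by simp
  with assms(4,5) show False by simp
qed

lemma smult_mat_nonzero:
  fixes a :: complex
  assumes "a \<noteq> 0" and "C \<in> carrier_mat n m" and "C \<noteq> 0\<^sub>m n m"
  shows "a \<cdot>\<^sub>m C \<noteq> 0\<^sub>m n m"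
proof
  assume "a \<cdot>\<^sub>m C = 0\<^sub>m n m"
  then have "a * C $$ (i, j) = 0" if "i < n" "j < m" for i j
    using that assms(2) by (metis carrier_matD index_smult_mat(1) index_zero_mat(1))
  then have "C $$ (i, j) = 0" if "i < n" "j < m" for i j
    using that assms(1) by (metis mult_eq_0_iff)
  then have "C = 0\<^sub>m n m"
    using assms(2) by (intro eq_matI) auto
  with assms(3) show False ..
qed

lemma unitary_conj_nonzero_index:
  assumes U: "unitary_n n U" and X: "X \<in> carrier_mat n n" and "X \<noteq> 0\<^sub>m n n"
  shows "\<exists>i<n. \<exists>j<n. (mat_adjoint U * X * U) $$ (i, j) \<noteq> 0"
proof -
  have "mat_adjoint U * X * U \<noteq> 0\<^sub>m n n"
    using unitary_conj_inverse[OF U X] unitary_nD(1,2)[OF U] assms(3) by auto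
  moreover have "mat_adjoint U * X * U \<in> carrier_mat n n"
    using unitary_nD(1,2)[OF U] X by auto
  ultimately show ?thesis
    by (metis eq_matI carrier_matD index_zero_mat(1,2,3))
qed

lemma sum_sum_strict_mono:
  fixes f g :: "nat \<Rightarrow> nat \<Rightarrow> 'a :: ordered_cancel_comm_monoid_add"
  assumes le: "\<And>i j. i < n \<Longrightarrow> j < m \<Longrightarrow> f i j \<le> g i j"
    and "i < n" and "j < m" and "f i j < g i j"
  shows "(\<Sum>i<n. \<Sum>j<m. f i j) < (\<Sum>i<n. \<Sum>j<m. g i j)"
proof (rule sum_strict_mono_ex1)
  show "\<forall>i'\<in>{..<n}. (\<Sum>j<m. f i' j) \<le> (\<Sum>j<m. g i' j)"
    using le by (auto intro: sum_mono)
  have "(\<Sum>j<m. f i j) < (\<Sum>j<m. g i j)"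
    using assms by (intro sum_strict_mono_ex1) (auto intro!: bexI[of _ j])
  then show "\<exists>i'\<in>{..<n}. (\<Sum>j<m. f i' j) < (\<Sum>j<m. g i' j)"
    using \<open>i < n\<close> by blast
qed simp

lemma norm_sq_f_commutator_diag_less:
  fixes h :: "nat \<Rightarrow> real" and n :: nat
  defines "\<rho> \<equiv> mat_diag n (\<lambda>i. complex_of_real (h i))"
  assumes A: "A \<in> carrier_mat n n" and noncomm: "commutator \<rho> A \<noteq> 0\<^sub>m n n"
    and gap: "\<forall>i<n. \<forall>j<n. h i \<noteq> h j \<longrightarrow> c / m_f g\<^sub>1 (h i) (h j) < 1 / m_f g\<^sub>2 (h i) (h j)"
  shows "c * norm_sq_f g\<^sub>1 \<rho> (\<i> \<cdot>\<^sub>m commutator \<rho> A) < norm_sq_f g\<^sub>2 \<rho> (\<i> \<cdot>\<^sub>m commutator \<rho> A)"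
proof -
  define X where "X = \<i> \<cdot>\<^sub>m commutator \<rho> A"
  obtain U l where ed: "eig_decomp \<rho> = (U, l)" by fastforce
  have \<rho>c: "\<rho> \<in> carrier_mat n n" unfolding \<rho>_def by simp
  note U = eig_decomp_diag(1)[OF ed[unfolded \<rho>_def]]
  note \<rho>U = eig_decomp_diag(2)[OF ed[unfolded \<rho>_def], folded \<rho>_def]
  note eigenvalue = eig_decomp_diag(3)[OF ed[unfolded \<rho>_def]]
  define Y where "Y = mat_adjoint U * X * U"
  have Y_nonzero_gap: "c / m_f g\<^sub>1 (l i) (l j) < 1 / m_f g\<^sub>2 (l i) (l j)"
    if ij: "i < n" "j < n" "Y $$ (i, j) \<noteq> 0" for i j
  proof -
    have "l i \<noteq> l j"
      using ij commutator_unitary_conj_index[OF U A, of i j l] unfolding Y_def X_def \<rho>U by auto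
    moreover obtain ki kj where "ki < n" "kj < n" "l i = h ki" "l j = h kj"
      using eigenvalue ij(1,2) by metis
    ultimately show ?thesis using gap by auto
  qed
  have term_less: "c * ((cmod (Y $$ (i, j)))\<^sup>2 / m_f g\<^sub>1 (l i) (l j)) < (cmod (Y $$ (i, j)))\<^sup>2 / m_f g\<^sub>2 (l i) (l j)"
    if ij: "i < n" "j < n" "Y $$ (i, j) \<noteq> 0" for i j
    using mult_strict_left_mono[OF Y_nonzero_gap[OF ij], of "(cmod (Y $$ (i, j)))\<^sup>2"] ij(3)
    by (simp add: mult.commute)
  have term_le: "c * ((cmod (Y $$ (i, j)))\<^sup>2 / m_f g\<^sub>1 (l i) (l j)) \<le> (cmod (Y $$ (i, j)))\<^sup>2 / m_f g\<^sub>2 (l i) (l j)"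
    if "i < n" "j < n" for i j
    using term_less[OF that] by (cases "Y $$ (i, j) = 0") auto
  have Cc: "commutator \<rho> A \<in> carrier_mat n n"
    unfolding commutator_def using A \<rho>c by (meson mult_carrier_mat minus_carrier_mat)
  then have Xc: "X \<in> carrier_mat n n" unfolding X_def by simp
  have "X \<noteq> 0\<^sub>m n n"
    unfolding X_def using Cc noncomm by (intro smult_mat_nonzero) auto
  then obtain i j where ij: "i < n" "j < n" "Y $$ (i, j) \<noteq> 0"
    using unitary_conj_nonzero_index[OF U Xc] unfolding Y_def by blast
  have "(\<Sum>i<n. \<Sum>j<n. c * ((cmod (Y $$ (i, j)))\<^sup>2 / m_f g\<^sub>1 (l i) (l j)))
      < (\<Sum>i<n. \<Sum>j<n. (cmod (Y $$ (i, j)))\<^sup>2 / m_f g\<^sub>2 (l i) (l j))"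
    using term_le ij(1,2) term_less[OF ij] by (rule sum_sum_strict_mono)
  then show ?thesis
    unfolding X_def[symmetric] norm_sq_f_eigenbasis[OF ed U \<rho>c Xc] Y_def[symmetric]
    by (simp add: sum_distrib_left)
qed

lemma m_f_SLD_dominates:
  assumes f: "f \<in> F_op" and "0 \<le> c" and "0 < x" and "0 < y" and "x + y = 1" and "c < min x y"
  shows "2 * c / m_f f x y < 1 / m_f f_SLD x y"
proof -
  have "c < m_f f x y" using m_f_ge_min[OF f \<open>0 < x\<close> \<open>0 < y\<close>] assms(6) by linarith
  then have "2 * c / m_f f x y < 2"
    using \<open>0 \<le> c\<close> by (simp add: divide_less_eq)
  then show ?thesis
    using \<open>0 < x\<close> \<open>x + y = 1\<close> by (simp add: m_f_SLD)
qed

theorem mainTheorem7: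
  fixes f :: "real \<Rightarrow> real" and k :: real
  assumes "f \<in> F_op_r"
    and "1 \<le> k" and "k < 1 / (2 * f_zero f)"
  shows "\<exists>n (\<rho>::complex mat) (A::complex mat).
           faithful_density n \<rho> \<and> hermitian_n n A \<and>
           I_SLD \<rho> A > k * f_information f \<rho> A"
proof -
  have f: "f \<in> F_op" and "f_zero f \<noteq> 0" using assms(1) unfolding F_op_r_def by auto
  moreover have "0 < 1 / (2 * f_zero f)" using assms(2,3) by linarith
  ultimately have f0: "0 < f_zero f" by (simp add: zero_less_divide_iff)
  define c where "c = k * f_zero f"
  have c: "0 < c" "c < 1 / 2"
    unfolding c_def using assms(2,3) f0 by (simp_all add: field_simps)
  define b where "b = (c + 1 / 2) / 2"
  have b: "c < b" "b < 1 - b" using c unfolding b_def by (simp_all add: field_simps)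
  define h :: "nat \<Rightarrow> real" where "h = (\<lambda>i. if i = 0 then 1 - b else b)"
  have h_distinct: "h 0 \<noteq> h 1" using b by (simp add: h_def)
  define \<rho> where "\<rho> = mat_diag 2 (\<lambda>i. complex_of_real (h i))"
  define A :: "complex mat" where "A = mat 2 2 (\<lambda>(i, j). if i = j then 0 else 1)"
  have A: "A \<in> carrier_mat 2 2" "hermitian_n 2 A"
    unfolding A_def hermitian_n_def by auto
  have "faithful_density 2 \<rho>"
    unfolding \<rho>_def using b c by (intro faithful_density_diag) (auto simp: h_def numeral_2_eq_2)
  moreover have "commutator \<rho> A \<noteq> 0\<^sub>m 2 2"
    unfolding \<rho>_def using A(1) h_distinct
    by (intro commutator_diag_nonzero[of _ _ 0 1]) (simp_all add: A_def)
  moreover have "\<forall>i<2. \<forall>j<2. h i \<noteq> h j \<longrightarrow> 2 * c / m_f f (h i) (h j) < 1 / m_f f_SLD (h i) (h j)"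
    using b c by (auto simp: h_def less_2_cases_iff intro!: m_f_SLD_dominates[OF f])
  ultimately have "2 * c * norm_sq_f f \<rho> (\<i> \<cdot>\<^sub>m commutator \<rho> A) < norm_sq_f f_SLD \<rho> (\<i> \<cdot>\<^sub>m commutator \<rho> A)"
    using norm_sq_f_commutator_diag_less[OF A(1)] unfolding \<rho>_def by blast
  then have "k * f_information f \<rho> A < I_SLD \<rho> A"
    unfolding I_SLD_def f_information_def f_zero_SLD c_def by simp
  with \<open>faithful_density 2 \<rho>\<close> A(2) show ?thesis by blast
qed

end
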